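(* Let $n\ge2$ and let $X_1,\dots,X_n$ be nonnegative random variables, $X_{n:n}=\max_iX_i$, $S_n=\sum_{i=1}^nX_i$, such that the distribution function of $X_{n:n}$ has infinite upper endpoint, $X_{n:n}\in\mathrm{GMDA}(h)$ for some positive $h$, and $$\lim_{x\to\infty}\frac{\mathbb{P}(|X_i|>t h(x),X_j>x)}{\mathbb{P}(X_{n:n}>x)}=0\ \text{for all }1\le i\ne j\le n,\ t>0,$$ $$\lim_{x\to\infty}\frac{\mathbb{P}(X_i>Lh(x),X_j>Lh(x))}{\mathbb{P}(X_{n:n}>x)}=0\ \text{for all }1\le i<j\le n\text{ and some }L>0.$$ For a nonempty $\Omega\subset\{1,\dots,n\}$ let $$u=\liminf_{x\to\infty}\frac{\sum_{i\in\Omega}\mathbb{P}(X_i>x)}{\sum_{i=1}^n\mathbb{P}(X_i>x)},\qquad U=\limsup_{x\to\infty}\frac{\sum_{i\in\Omega}\mathbb{P}(X_i>x)}{\sum_{i=1}^n\mathbb{P}(X_i>x)}.$$ Then $$u\le\liminf_{q\to1}\frac{\mathbb{E}\big(\sum_{i\in\Omega}X_i\,\big|\,S_n>\mathrm{VaR}_q(S_n)\big)}{\mathrm{VaR}_q(S_n)}\le\limsup_{q\to1}\frac{\mathbb{E}\big(\sum_{i\in\Omega}X_i\,\big|\,S_n>\mathrm{VaR}_q(S_n)\big)}{\mathrm{VaR}_q(S_n)}\le U.$$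
   Context: For $q\in(0,1)$, $\mathrm{VaR}_q(S_n)=\inf\{x:\mathbb{P}(S_n\le x)\ge q\}$. For a distribution function $F$, $\overline{F}=1-F$, $x_F=\sup\{x:F(x)<1\}$; $F\in\mathrm{GMDA}(h)$ means $\lim_{x\to x_F}\overline{F}(x+yh(x))/\overline{F}(x)=e^{-y}$ for all $y\in\mathbb{R}$. Random variables are assumed not degenerate at $0$. *)

theory Defs
  imports "HOL-Probability.Probability"
begin

definition distfun :: "'a measure \<Rightarrow> ('a \<Rightarrow> real) \<Rightarrow> real \<Rightarrow> real" where
  "distfun M Y x = measure M {\<omega> \<in> space M. Y \<omega> \<le> x}"

definition upper_endpoint :: "(real \<Rightarrow> real) \<Rightarrow> ereal" where
  "upper_endpoint F = Sup {ereal x | x. F x < 1}"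

definition GMDA :: "(real \<Rightarrow> real) \<Rightarrow> (real \<Rightarrow> real) \<Rightarrow> bool" where
  "GMDA F h = (\<forall>y::real.
     ((\<lambda>x. (1 - F (x + y * h x)) / (1 - F x)) \<longlongrightarrow> exp (- y))
       (if upper_endpoint F = \<infinity> then at_top else at_left (real_of_ereal (upper_endpoint F))))"

definition VaR :: "'a measure \<Rightarrow> ('a \<Rightarrow> real) \<Rightarrow> real \<Rightarrow> real" where
  "VaR M Y q = Inf {x. distfun M Y x \<ge> q}"

definition cond_exp_event :: "'a measure \<Rightarrow> ('a \<Rightarrow> real) \<Rightarrow> 'a set \<Rightarrow> real" where
  "cond_exp_event M Z A = (\<integral>\<omega>. indicator A \<omega> * Z \<omega> \<partial>M) / measure M A"

end

theory Submission
  imports Defs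
begin

text \<open>Under the two joint-tail conditions a large value of \<open>S\<^sub>n\<close> is produced by a single
  large summand, so \<open>P(S\<^sub>n > x) \<sim> P(X\<^sub>n\<^sub>:\<^sub>n > x) \<sim> \<Sum>\<^sub>i P(X\<^sub>i > x)\<close>.
  GMDA makes \<open>h(x) = o(x)\<close> and the tail of \<open>X\<^sub>n\<^sub>:\<^sub>n\<close> decay faster than any dilation, so
  \<open>X\<^sub>n\<^sub>:\<^sub>n\<close> is integrable and its overshoot beyond \<open>(1 + d) x\<close> contributes \<open>o(x P(S\<^sub>n > x))\<close>.
  Hence, on \<open>S\<^sub>n > x\<close>, the partial sum over \<open>\<Omega>\<close> is essentially \<open>x\<close> times the indicator that
  the large summand has index in \<open>\<Omega>\<close>, and \<open>E(\<Sum>\<^sub>\<Omega> X\<^sub>i | S\<^sub>n > x) / x\<close> differs from the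
  tail share of \<open>\<Omega>\<close> by \<open>o(1)\<close> as \<open>x \<rightarrow> \<infinity>\<close>. Since \<open>VaR\<^sub>q(S\<^sub>n) \<rightarrow> \<infinity>\<close> as \<open>q \<rightarrow> 1\<close>, the
  bounds on the lower and upper limits follow.\<close>

lemma Liminf_Limsup_comp_squeeze:
  fixes r c V :: "real \<Rightarrow> real"
  assumes lower: "\<And>e. e > 0 \<Longrightarrow> eventually (\<lambda>x. r x - e \<le> c x) at_top"
    and upper: "\<And>e. e > 0 \<Longrightarrow> eventually (\<lambda>x. c x \<le> r x + e) at_top"
    and V: "filterlim V at_top (at_left 1)"
  shows "Liminf at_top (\<lambda>x. ereal (r x)) \<le> Liminf (at_left 1) (\<lambda>q. ereal (c (V q)))
     \<and> Liminf (at_left 1) (\<lambda>q. ereal (c (V q))) \<le> Limsup (at_left 1) (\<lambda>q. ereal (c (V q)))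
     \<and> Limsup (at_left 1) (\<lambda>q. ereal (c (V q))) \<le> Limsup at_top (\<lambda>x. ereal (r x))"
proof (intro conjI)
  show "Liminf at_top (\<lambda>x. ereal (r x)) \<le> Liminf (at_left 1) (\<lambda>q. ereal (c (V q)))"
    unfolding le_Liminf_iff
  proof (intro allI impI)
    fix y assume "y < Liminf at_top (\<lambda>x. ereal (r x))"
    then obtain z z' where z: "y < ereal z'" "z' < z" "ereal z < Liminf at_top (\<lambda>x. ereal (r x))"
      by (metis ereal_dense2 less_ereal.simps(1))
    have "eventually (\<lambda>x. ereal z < ereal (r x)) at_top"
      using le_Liminf_iff[THEN iffD1, OF order_refl] z(3) by blast
    moreover have "eventually (\<lambda>x. r x - (z - z') \<le> c x) at_top" using lower z(2) by simp
    ultimately have "eventually (\<lambda>x. y < ereal (c x)) at_top"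
      by eventually_elim (rule order.strict_trans[OF z(1)], auto)
    then show "\<forall>\<^sub>F q in at_left 1. y < ereal (c (V q))"
      using V unfolding filterlim_iff by blast
  qed
next
  show "Liminf (at_left 1) (\<lambda>q. ereal (c (V q))) \<le> Limsup (at_left 1) (\<lambda>q. ereal (c (V q)))"
    by (rule Liminf_le_Limsup) simp
next
  show "Limsup (at_left 1) (\<lambda>q. ereal (c (V q))) \<le> Limsup at_top (\<lambda>x. ereal (r x))"
    unfolding Limsup_le_iff
  proof (intro allI impI)
    fix y assume "y > Limsup at_top (\<lambda>x. ereal (r x))"
    then obtain z z' where z: "Limsup at_top (\<lambda>x. ereal (r x)) < ereal z" "z < z'" "ereal z' < y"
      by (metis ereal_dense2 less_ereal.simps(1))
    have "eventually (\<lambda>x. ereal (r x) < ereal z) at_top"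
      using Limsup_le_iff[THEN iffD1, OF order_refl] z(1) by blast
    moreover have "eventually (\<lambda>x. c x \<le> r x + (z' - z)) at_top" using upper z(2) by simp
    ultimately have "eventually (\<lambda>x. ereal (c x) < y) at_top"
      by eventually_elim (rule order.strict_trans[OF _ z(3)], auto)
    then show "\<forall>\<^sub>F q in at_left 1. ereal (c (V q)) < y"
      using V unfolding filterlim_iff by blast
  qed
qed

lemma upper_endpoint_infinite_less_1:
  assumes "mono F" and "upper_endpoint F = \<infinity>"
  shows "F x < 1"
proof (rule ccontr)
  assume "\<not> F x < 1"
  have "Sup {ereal y | y. F y < 1} \<le> ereal x"
  proof (rule Sup_least, clarify)
    fix y assume "F y < 1"
    then show "ereal y \<le> ereal x"
      using \<open>\<not> F x < 1\<close> monoD[OF \<open>mono F\<close>, of x y] by force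
  qed
  then show False using assms(2) unfolding upper_endpoint_def by simp
qed

lemma ennreal_tail_le_dyadic_suminf:
  fixes v y :: real
  assumes y: "y > 0"
  shows "ennreal (v * indicator {y<..} v)
     \<le> (\<Sum>k. ennreal (2 ^ (k+1) * y) * indicator {2 ^ k * y<..} v)"
proof (cases "v > y")
  case False
  then show ?thesis by simp
next
  case True
  define K where "K = {k. 2 ^ k * y < v}"
  obtain N where N: "v / y < 2 ^ N" using real_arch_pow[of 2 "v / y"] by auto
  have "K \<subseteq> {..<N}"
  proof
    fix k assume "k \<in> K"
    moreover have "v < 2 ^ N * y" using N y by (simp add: divide_less_eq)
    ultimately have "2 ^ k * y < 2 ^ N * y" unfolding K_def by simp
    then show "k \<in> {..<N}" using y by simp
  qed
  then have "finite K" by (rule finite_subset) simp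
  moreover have "0 \<in> K" unfolding K_def using True by simp
  ultimately obtain m where m: "m \<in> K" "Suc m \<notin> K"
    by (metis Max_ge Max_in empty_iff not_less_eq_eq order_refl)
  have "ennreal (v * indicator {y<..} v) = ennreal (v)" using True by simp
  also have "\<dots> \<le> ennreal (2 ^ (m+1) * y) * indicator {2 ^ m * y<..} v"
    using m unfolding K_def by (simp add: ennreal_leI)
  also have "\<dots> \<le> (\<Sum>k<Suc m. ennreal (2 ^ (k+1) * y) * indicator {2 ^ k * y<..} v)"
    by (rule member_le_sum) auto
  also have "\<dots> \<le> (\<Sum>k. ennreal (2 ^ (k+1) * y) * indicator {2 ^ k * y<..} v)"
    by (rule sum_le_suminf[OF summableI]) auto
  finally show ?thesis .
qed

text \<open>A summand \<open>v \<le> m\<close> of a sum \<open>s > x\<close> is at most \<open>d x\<close>, or in \<open>(d x, x]\<close>, or in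
  \<open>(x, (1 + d) x]\<close> (then \<open>m > x\<close> and \<open>v \<le> x + d x\<close>), or \<open>m > (1 + d) x\<close>.\<close>
lemma large_sum_summand_le:
  fixes v m s x d :: real
  assumes "0 \<le> v" "v \<le> m" "0 \<le> x" "0 < d"
  shows "of_bool (s > x) * v \<le> x * of_bool (v > x) + d * x * of_bool (m > x)
    + m * of_bool (m > (1 + d) * x) + d * x * of_bool (s > x)
    + x * of_bool (d * x < v \<and> v \<le> x \<and> s > x)"
proof -
  have "0 \<le> d * x" using assms by simp
  with assms show ?thesis by (auto simp: distrib_right) (use \<open>0 \<le> d * x\<close> in linarith)+
qed

context prob_space
begin

lemma distfun_eq_1_minus_prob_greater:
  fixes f :: "'a \<Rightarrow> real"
  assumes [measurable]: "f \<in> borel_measurable M"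
  shows "distfun M f x = 1 - prob {\<omega> \<in> space M. f \<omega> > x}"
proof -
  have "{\<omega> \<in> space M. f \<omega> \<le> x} = space M - {\<omega> \<in> space M. f \<omega> > x}" by auto
  then show ?thesis unfolding distfun_def by (simp add: prob_compl)
qed

lemma prob_greater_tendsto_0:
  fixes f :: "'a \<Rightarrow> real"
  assumes [measurable]: "f \<in> borel_measurable M"
  shows "((\<lambda>x. prob {\<omega> \<in> space M. f \<omega> > x}) \<longlongrightarrow> 0) at_top"
proof -
  define B where "B k = {\<omega> \<in> space M. f \<omega> > real k}" for k :: nat
  have "(\<lambda>k. prob (B k)) \<longlonglongrightarrow> prob (\<Inter> (range B))"
    by (rule finite_Lim_measure_decseq) (auto simp: B_def monotone_on_def)
  moreover have "\<Inter> (range B) = {}"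
  proof safe
    fix \<omega> assume "\<omega> \<in> \<Inter> (range B)"
    then have "f \<omega> > real (nat (ceiling (f \<omega>)))" unfolding B_def by blast
    then show "\<omega> \<in> {}" by linarith
  qed
  ultimately have lim: "(\<lambda>k. prob {\<omega> \<in> space M. f \<omega> > real k}) \<longlonglongrightarrow> 0" unfolding B_def by simp
  have mono: "prob {\<omega> \<in> space M. f \<omega> > y} \<le> prob {\<omega> \<in> space M. f \<omega> > x}" if "x \<le> y" for x y
    using that by (intro finite_measure_mono) auto
  show ?thesis
  proof (rule order_tendstoI)
    fix e :: real assume "e > 0"
    then obtain N where "prob {\<omega> \<in> space M. f \<omega> > real N} < e"
      using order_tendstoD(2)[OF lim] by (auto simp: eventually_sequentially)
    then show "\<forall>\<^sub>F x in at_top. prob {\<omega> \<in> space M. f \<omega> > x} < e"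
      using mono unfolding eventually_at_top_linorder by (meson le_less_trans)
  next
    fix e :: real assume "e < 0"
    then show "\<forall>\<^sub>F x in at_top. e < prob {\<omega> \<in> space M. f \<omega> > x}"
      by (intro always_eventually allI) (auto intro: less_le_trans)
  qed
qed

lemma VaR_tendsto_at_top:
  fixes f :: "'a \<Rightarrow> real"
  assumes [measurable]: "f \<in> borel_measurable M"
    and pos: "\<And>x. prob {\<omega> \<in> space M. f \<omega> > x} > 0"
  shows "filterlim (VaR M f) at_top (at_left 1)"
  unfolding filterlim_at_top
proof
  fix z :: real
  have "1 - prob {\<omega> \<in> space M. f \<omega> > z} < 1" using pos[of z] by simp
  from eventually_at_left_real[OF this] show "\<forall>\<^sub>F q in at_left 1. z \<le> VaR M f q"
  proof eventually_elim
    case (elim q)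
    define Y where "Y = {y. distfun M f y \<ge> q}"
    obtain y where "prob {\<omega> \<in> space M. f \<omega> > y} < 1 - q"
      using order_tendstoD(2)[OF prob_greater_tendsto_0, of f "1 - q"] elim
      by (auto simp: eventually_at_top_linorder)
    then have "y \<in> Y" unfolding Y_def distfun_eq_1_minus_prob_greater[OF assms(1)] by simp
    moreover have "z \<le> y'" if "y' \<in> Y" for y'
    proof (rule ccontr)
      assume "\<not> z \<le> y'"
      then have "prob {\<omega> \<in> space M. f \<omega> > z} \<le> prob {\<omega> \<in> space M. f \<omega> > y'}"
        by (intro finite_measure_mono) auto
      then show False
        using that elim unfolding Y_def distfun_eq_1_minus_prob_greater[OF assms(1)] by simp
    qed
    ultimately show ?case unfolding VaR_def Y_def[symmetric] by (intro cInf_greatest) auto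
  qed
qed

lemma integrable_indicator_real[simp]: "B \<in> sets M \<Longrightarrow> integrable M (indicator B :: 'a \<Rightarrow> real)"
  by (simp add: integrable_real_indicator less_top[symmetric])

lemma integral_const_mult_indicator:
  "B \<in> sets M \<Longrightarrow> (\<integral>\<omega>. c * indicator B \<omega> \<partial>M) = c * prob B"
  by (simp add: integrable_real_indicator less_top[symmetric])

lemma suminf_dyadic_weighted_le:
  fixes P :: "real \<Rightarrow> real"
  assumes y: "y > 0" and P_nonneg: "\<And>t. P t \<ge> 0" and P_dyadic: "\<And>k. P (2 ^ k * y) \<le> (1/4) ^ k * P y"
  shows "(\<Sum>k. ennreal (2 ^ (k+1) * y * P (2 ^ k * y))) \<le> ennreal (4 * y * P y)"
proof -
  have "(\<Sum>k. ennreal (2 ^ (k+1) * y * P (2 ^ k * y))) \<le> (\<Sum>k. ennreal (2 * y * P y * (1/2) ^ k))"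
  proof (rule suminf_le[OF _ summableI summableI])
    fix k
    have "2 ^ (k+1) * y * P (2 ^ k * y) \<le> 2 ^ (k+1) * y * ((1/4) ^ k * P y)"
      using P_dyadic[of k] y by (intro mult_left_mono) auto
    also have "\<dots> = 2 * y * P y * (1/2) ^ k"
      by (simp add: power_divide field_simps flip: power_mult_distrib)
    finally show "ennreal (2 ^ (k+1) * y * P (2 ^ k * y)) \<le> ennreal (2 * y * P y * (1/2) ^ k)"
      by (rule ennreal_leI)
  qed
  also have "\<dots> = ennreal (\<Sum>k. 2 * y * P y * (1/2) ^ k)"
    using y P_nonneg by (intro suminf_ennreal2) (auto intro!: summable_mult summable_geometric)
  also have "(\<Sum>k. 2 * y * P y * (1/2::real) ^ k) = 4 * y * P y"
    using suminf_mult[OF summable_geometric[of "1/2::real"], of "2 * y * P y"]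
      suminf_geometric[of "1/2::real"] by simp
  finally show ?thesis .
qed

lemma nn_integral_tail_le_of_doubling_decay:
  fixes Y :: "'a \<Rightarrow> real"
  assumes [measurable]: "Y \<in> borel_measurable M"
    and decay: "\<And>z. z \<ge> z0 \<Longrightarrow>
      prob {\<omega> \<in> space M. Y \<omega> > 2 * z} \<le> prob {\<omega> \<in> space M. Y \<omega> > z} / 4"
    and y: "y > 0" "y \<ge> z0"
  shows "(\<integral>\<^sup>+\<omega>. ennreal (Y \<omega> * indicator {\<omega> \<in> space M. Y \<omega> > y} \<omega>) \<partial>M)
    \<le> ennreal (4 * y * prob {\<omega> \<in> space M. Y \<omega> > y})"
proof -
  define P where "P t = prob {\<omega> \<in> space M. Y \<omega> > t}" for t
  have P_nonneg: "P t \<ge> 0" for t unfolding P_def by simp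
  have P_dyadic: "P (2 ^ k * y) \<le> (1/4) ^ k * P y" for k
  proof (induction k)
    case (Suc k)
    have "y \<le> 2 ^ k * y" using y by simp
    then have "P (2 * (2 ^ k * y)) \<le> P (2 ^ k * y) / 4"
      unfolding P_def using y by (intro decay) linarith
    then show ?case using Suc by (simp add: mult.assoc)
  qed simp
  have indicator_eq: "indicator {t<..} (Y \<omega>) = indicator {\<omega> \<in> space M. Y \<omega> > t} \<omega>"
    if "\<omega> \<in> space M" for t \<omega> using that by (simp add: indicator_def)
  have "(\<integral>\<^sup>+\<omega>. ennreal (Y \<omega> * indicator {\<omega> \<in> space M. Y \<omega> > y} \<omega>) \<partial>M)
      \<le> (\<integral>\<^sup>+\<omega>. (\<Sum>k. ennreal (2 ^ (k+1) * y) * indicator {\<omega> \<in> space M. Y \<omega> > 2 ^ k * y} \<omega>) \<partial>M)"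
  proof (rule nn_integral_mono)
    fix \<omega> assume "\<omega> \<in> space M"
    then show "ennreal (Y \<omega> * indicator {\<omega> \<in> space M. Y \<omega> > y} \<omega>)
        \<le> (\<Sum>k. ennreal (2 ^ (k+1) * y) * indicator {\<omega> \<in> space M. Y \<omega> > 2 ^ k * y} \<omega>)"
      using ennreal_tail_le_dyadic_suminf[OF y(1), of "Y \<omega>"] by (simp only: indicator_eq)
  qed
  also have "\<dots> = (\<Sum>k. \<integral>\<^sup>+\<omega>. ennreal (2 ^ (k+1) * y)
      * indicator {\<omega> \<in> space M. Y \<omega> > 2 ^ k * y} \<omega> \<partial>M)"
    by (rule nn_integral_suminf) simp
  also have "\<dots> = (\<Sum>k. ennreal (2 ^ (k+1) * y * P (2 ^ k * y)))"
    using y by (simp add: P_def emeasure_eq_measure ennreal_mult'' nn_integral_cmult_indicator)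
  also have "\<dots> \<le> ennreal (4 * y * P y)"
    using y(1) P_nonneg P_dyadic by (rule suminf_dyadic_weighted_le)
  finally show ?thesis unfolding P_def .
qed

lemma integrable_of_doubling_decay:
  fixes Y :: "'a \<Rightarrow> real"
  assumes [measurable]: "Y \<in> borel_measurable M"
    and nonneg: "\<And>\<omega>. \<omega> \<in> space M \<Longrightarrow> Y \<omega> \<ge> 0"
    and decay: "eventually (\<lambda>z. prob {\<omega> \<in> space M. Y \<omega> > 2 * z}
      \<le> prob {\<omega> \<in> space M. Y \<omega> > z} / 4) at_top"
  shows "integrable M Y"
proof -
  obtain z0 where z0: "\<And>z. z \<ge> z0 \<Longrightarrow>
      prob {\<omega> \<in> space M. Y \<omega> > 2 * z} \<le> prob {\<omega> \<in> space M. Y \<omega> > z} / 4"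
    using decay by (auto simp: eventually_at_top_linorder)
  define y where "y = max z0 1"
  have y: "y > 0" "y \<ge> z0" unfolding y_def by auto
  have "integrable M (\<lambda>\<omega>. Y \<omega> * indicator {\<omega> \<in> space M. Y \<omega> > y} \<omega>)"
  proof (rule integrableI_nonneg)
    show "AE \<omega> in M. 0 \<le> Y \<omega> * indicator {\<omega> \<in> space M. Y \<omega> > y} \<omega>"
      using nonneg by (auto simp: indicator_def)
    show "(\<integral>\<^sup>+\<omega>. ennreal (Y \<omega> * indicator {\<omega> \<in> space M. Y \<omega> > y} \<omega>) \<partial>M) < \<infinity>"
      using nn_integral_tail_le_of_doubling_decay[OF _ z0 y] by (simp add: le_less_trans)
  qed simp
  then have "integrable M (\<lambda>\<omega>. Y \<omega> * indicator {\<omega> \<in> space M. Y \<omega> > y} \<omega> + y)"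
    by simp
  then show ?thesis
    by (rule Bochner_Integration.integrable_bound)
      (use nonneg y in \<open>auto simp: indicator_def\<close>)
qed

lemma tail_integral_le_of_doubling_decay:
  fixes Y :: "'a \<Rightarrow> real"
  assumes [measurable]: "Y \<in> borel_measurable M"
    and nonneg: "\<And>\<omega>. \<omega> \<in> space M \<Longrightarrow> Y \<omega> \<ge> 0"
    and decay: "eventually (\<lambda>z. prob {\<omega> \<in> space M. Y \<omega> > 2 * z}
      \<le> prob {\<omega> \<in> space M. Y \<omega> > z} / 4) at_top"
  shows "eventually (\<lambda>y. (\<integral>\<omega>. Y \<omega> * indicator {\<omega> \<in> space M. Y \<omega> > y} \<omega> \<partial>M)
    \<le> 4 * y * prob {\<omega> \<in> space M. Y \<omega> > y}) at_top"
proof -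
  obtain z0 where z0: "\<And>z. z \<ge> z0 \<Longrightarrow>
      prob {\<omega> \<in> space M. Y \<omega> > 2 * z} \<le> prob {\<omega> \<in> space M. Y \<omega> > z} / 4"
    using decay by (auto simp: eventually_at_top_linorder)
  have "(\<integral>\<omega>. Y \<omega> * indicator {\<omega> \<in> space M. Y \<omega> > y} \<omega> \<partial>M)
      \<le> 4 * y * prob {\<omega> \<in> space M. Y \<omega> > y}" if y: "y \<ge> max z0 1" for y
  proof -
    have "(\<integral>\<omega>. Y \<omega> * indicator {\<omega> \<in> space M. Y \<omega> > y} \<omega> \<partial>M)
        = enn2real (\<integral>\<^sup>+\<omega>. ennreal (Y \<omega> * indicator {\<omega> \<in> space M. Y \<omega> > y} \<omega>) \<partial>M)"
      using nonneg by (intro integral_eq_nn_integral) (auto simp: indicator_def)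
    also have "\<dots> \<le> enn2real (ennreal (4 * y * prob {\<omega> \<in> space M. Y \<omega> > y}))"
      using nn_integral_tail_le_of_doubling_decay[OF _ z0, of y] y
      by (intro enn2real_mono) auto
    also have "\<dots> = 4 * y * prob {\<omega> \<in> space M. Y \<omega> > y}" using y by simp
    finally show ?thesis .
  qed
  then show ?thesis unfolding eventually_at_top_linorder by blast
qed

end

section \<open>Tails in the Gumbel max-domain of attraction\<close>

text \<open>\<open>D\<close> plays the role of the survival function \<open>1 - F\<close> of a nonnegative random variable with
  \<open>x\<^sub>F = \<infinity>\<close> and \<open>F \<in> GMDA(h)\<close>.\<close>
locale gmda_tail =
  fixes D h :: "real \<Rightarrow> real"
  assumes D_antimono: "x \<le> y \<Longrightarrow> D y \<le> D x"
    and D_pos: "D x > 0"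
    and D_neg: "x < 0 \<Longrightarrow> D x = 1"
    and D_tendsto_0: "(D \<longlongrightarrow> 0) at_top"
    and gmda: "((\<lambda>x. D (x + y * h x) / D x) \<longlongrightarrow> exp (- y)) at_top"
begin

lemma gmda_upper:
  assumes "b > exp (- y)"
  shows "eventually (\<lambda>x. D (x + y * h x) < b * D x) at_top"
  using order_tendstoD(2)[OF gmda assms]
  by eventually_elim (use D_pos in \<open>auto simp: divide_less_eq\<close>)

lemma gmda_lower:
  assumes "b < exp (- y)"
  shows "eventually (\<lambda>x. b * D x < D (x + y * h x)) at_top"
  using order_tendstoD(1)[OF gmda assms]
  by eventually_elim (use D_pos in \<open>auto simp: less_divide_eq\<close>)

lemma sum_le_eventually:
  assumes "finite P" "\<And>p. p \<in> P \<Longrightarrow> ((\<lambda>x. f p x / D x) \<longlongrightarrow> 0) at_top" "e > 0"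
  shows "eventually (\<lambda>x. (\<Sum>p\<in>P. f p x) \<le> e * D x) at_top"
proof -
  have "((\<lambda>x. \<Sum>p\<in>P. f p x / D x) \<longlongrightarrow> 0) at_top"
    using tendsto_sum[of P "\<lambda>p x. f p x / D x" "\<lambda>_. 0"] assms(2) by simp
  from order_tendstoD(2)[OF this assms(3)] show ?thesis
    by eventually_elim (use D_pos in \<open>auto simp: divide_less_eq simp flip: sum_divide_distrib\<close>)
qed

text \<open>If \<open>h x > a x\<close> then \<open>x - h x / a < 0\<close>, where \<open>D = 1\<close>; GMDA bounds that value by a
  multiple of \<open>D x \<longrightarrow> 0\<close>.\<close>
lemma h_le_linear:
  assumes a: "a > 0"
  shows "eventually (\<lambda>x. h x \<le> a * x) at_top"
proof -
  define K where "K = exp (1 / a) + 1"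
  have K: "K > 1" unfolding K_def by simp
  have "eventually (\<lambda>x. D (x + (- 1 / a) * h x) < K * D x) at_top"
    by (rule gmda_upper) (simp add: K_def)
  moreover have "eventually (\<lambda>x. D x < 1 / K) at_top"
    using order_tendstoD(2)[OF D_tendsto_0, of "1 / K"] K by simp
  ultimately show ?thesis
  proof eventually_elim
    case (elim x)
    show ?case
    proof (rule ccontr)
      assume "\<not> h x \<le> a * x"
      then have "x + (- 1 / a) * h x < 0" using a by (simp add: field_simps)
      then have "1 < K * D x" using elim(1) D_neg by simp
      moreover have "K * D x < 1" using elim(2) K by (simp add: less_divide_eq mult.commute)
      ultimately show False by simp
    qed
  qed
qed

lemma D_dilation_le:
  assumes \<kappa>: "\<kappa> > 1" and \<eta>: "\<eta> > 0"
  shows "eventually (\<lambda>x. D (\<kappa> * x) \<le> \<eta> * D x) at_top"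
proof -
  define y where "y = \<bar>ln \<eta>\<bar> + 1"
  have y: "y > 0" unfolding y_def by simp
  have "exp (- y) < \<eta>"
  proof -
    have "exp (- y) \<le> exp (ln \<eta> - 1)" unfolding y_def by simp
    also have "\<dots> < \<eta>" using \<eta> by (simp add: exp_diff divide_less_eq)
    finally show ?thesis .
  qed
  then have "eventually (\<lambda>x. D (x + y * h x) < \<eta> * D x) at_top" by (rule gmda_upper)
  moreover have "eventually (\<lambda>x. h x \<le> ((\<kappa> - 1) / y) * x) at_top"
    using h_le_linear[of "(\<kappa> - 1) / y"] \<kappa> y by simp
  moreover have "eventually (\<lambda>x::real. x \<ge> 0) at_top" by (rule eventually_ge_at_top)
  ultimately show ?thesis
  proof eventually_elim
    case (elim x)
    then have "x + y * h x \<le> \<kappa> * x" using y by (simp add: field_simps)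
    then show ?case using elim(1) D_antimono[of "x + y * h x" "\<kappa> * x"] by simp
  qed
qed

lemma filterlim_minus_h_at_top:
  assumes c: "c \<ge> 0"
  shows "filterlim (\<lambda>x. x - c * h x) at_top at_top"
proof -
  have h: "eventually (\<lambda>x. h x \<le> (1 / (2 * c + 2)) * x) at_top"
    using h_le_linear[of "1 / (2 * c + 2)"] c by simp
  show ?thesis unfolding filterlim_at_top
  proof
    fix z :: real
    have "eventually (\<lambda>x. x \<ge> 2 * \<bar>z\<bar>) at_top" by simp
    with h show "eventually (\<lambda>x. z \<le> x - c * h x) at_top"
    proof eventually_elim
      case (elim x)
      have x: "x \<ge> 0" using elim(2) by linarith
      have "c * h x \<le> c * ((1 / (2 * c + 2)) * x)" using elim(1) c by (rule mult_left_mono)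
      also have "\<dots> \<le> x / 2" using c x by (simp add: field_simps)
      finally show ?case using elim(2) by linarith
    qed
  qed
qed

lemma eventually_filterlim_minus_h:
  assumes "c \<ge> 0" and "eventually P at_top"
  shows "eventually (\<lambda>x. P (x - c * h x)) at_top"
  using filterlim_iff[THEN iffD1, OF filterlim_minus_h_at_top[OF assms(1)], rule_format,
      OF assms(2)] .

text \<open>Self-neglecting property of the auxiliary function, in the weak form needed here:
  were \<open>h (x - c h x) > 2 h x\<close>, GMDA would give \<open>e\<^sup>c\<^sup>-\<^sup>1 D x \<lesssim> e\<^sup>c\<^sup>-\<^sup>2 D x\<close>.\<close>
lemma h_shift_le:
  assumes c: "c \<ge> 0"
  shows "eventually (\<lambda>x. h (x - c * h x) \<le> 2 * h x) at_top"
proof -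
  have ahead: "eventually (\<lambda>x. D (x + (2 - c) * h x) < (11/10 * exp (c - 2)) * D x) at_top"
    by (rule gmda_upper) simp
  have behind: "eventually (\<lambda>x. (9/10 * exp c) * D x < D (x + (- c) * h x)) at_top"
    by (rule gmda_lower) simp
  have "eventually (\<lambda>x. (9/10 * exp (-1)) * D x < D (x + 1 * h x)) at_top"
    by (rule gmda_lower) simp
  then have step: "eventually (\<lambda>x. (9/10 * exp (-1)) * D (x - c * h x)
       < D ((x - c * h x) + 1 * h (x - c * h x))) at_top"
    by (rule eventually_filterlim_minus_h[OF c])
  from ahead behind step show ?thesis
  proof eventually_elim
    case (elim x)
    show ?case
    proof (rule ccontr)
      assume "\<not> h (x - c * h x) \<le> 2 * h x"
      then have "x + (2 - c) * h x \<le> (x - c * h x) + 1 * h (x - c * h x)"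
        by (simp add: algebra_simps)
      then have "D ((x - c * h x) + 1 * h (x - c * h x)) \<le> D (x + (2 - c) * h x)"
        by (rule D_antimono)
      then have upper: "9/10 * exp (-1) * D (x - c * h x) < 11/10 * exp (c - 2) * D x"
        using elim(1,3) by linarith
      have "exp (-1::real) \<le> 1/2"
        using exp_ge_add_one_self[of 1] by (simp add: exp_minus field_simps)
      define K where "K = exp c * exp (-1) * D x"
      have "K > 0" unfolding K_def by (simp add: D_pos)
      have "81/100 * K = 9/10 * exp (-1) * (9/10 * exp c * D x)" unfolding K_def by simp
      also have "\<dots> \<le> 9/10 * exp (-1) * D (x - c * h x)" using elim(2) by (simp add: mult.commute)
      also have "\<dots> < 11/10 * exp (c - 2) * D x" by (rule upper)
      also have "\<dots> = 11/10 * exp (-1) * K" unfolding K_def by (simp add: mult_exp_exp)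
      finally have "81/100 < 11/10 * exp (-1::real)" using \<open>K > 0\<close> by simp
      then show False using \<open>exp (-1) \<le> 1/2\<close> by simp
    qed
  qed
qed

end

section \<open>Conditional tail expectations of partial sums\<close>

locale cte_asymptotics = prob_space M for M :: "'a measure" +
  fixes X :: "nat \<Rightarrow> 'a \<Rightarrow> real" and n :: nat and h :: "real \<Rightarrow> real" and \<Omega> :: "nat set"
  assumes n2: "n \<ge> 2"
    and meas[measurable]: "\<And>i. i \<in> {1..n} \<Longrightarrow> X i \<in> borel_measurable M"
    and nonneg: "\<And>i \<omega>. i \<in> {1..n} \<Longrightarrow> \<omega> \<in> space M \<Longrightarrow> X i \<omega> \<ge> 0"
    and endpoint: "upper_endpoint (distfun M (\<lambda>\<omega>. Max ((\<lambda>i. X i \<omega>) ` {1..n}))) = \<infinity>"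
    and hpos: "\<And>x. h x > 0"
    and gmda_max: "GMDA (distfun M (\<lambda>\<omega>. Max ((\<lambda>i. X i \<omega>) ` {1..n}))) h"
    and cond1: "\<And>i j t. i \<in> {1..n} \<Longrightarrow> j \<in> {1..n} \<Longrightarrow> i \<noteq> j \<Longrightarrow> t > 0 \<Longrightarrow>
       ((\<lambda>x. measure M {\<omega> \<in> space M. \<bar>X i \<omega>\<bar> > t * h x \<and> X j \<omega> > x}
           / measure M {\<omega> \<in> space M. Max ((\<lambda>k. X k \<omega>) ` {1..n}) > x}) \<longlongrightarrow> 0) at_top"
    and cond2: "\<exists>L>0. \<forall>i\<in>{1..n}. \<forall>j\<in>{1..n}. i < j \<longrightarrow>
       ((\<lambda>x. measure M {\<omega> \<in> space M. X i \<omega> > L * h x \<and> X j \<omega> > L * h x}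
           / measure M {\<omega> \<in> space M. Max ((\<lambda>k. X k \<omega>) ` {1..n}) > x}) \<longlongrightarrow> 0) at_top"
    and \<Omega>: "\<Omega> \<subseteq> {1..n}"
begin

definition Xmax :: "'a \<Rightarrow> real" where "Xmax \<omega> = Max ((\<lambda>i. X i \<omega>) ` {1..n})"
definition S :: "'a \<Rightarrow> real" where "S \<omega> = (\<Sum>i\<in>{1..n}. X i \<omega>)"
definition S\<Omega> :: "'a \<Rightarrow> real" where "S\<Omega> \<omega> = (\<Sum>i\<in>\<Omega>. X i \<omega>)"

definition exceeds :: "nat \<Rightarrow> real \<Rightarrow> 'a set" where
  "exceeds i x = {\<omega> \<in> space M. X i \<omega> > x}"
definition exceeds_max :: "real \<Rightarrow> 'a set" where
  "exceeds_max x = {\<omega> \<in> space M. Xmax \<omega> > x}"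
definition exceeds_S :: "real \<Rightarrow> 'a set" where
  "exceeds_S x = {\<omega> \<in> space M. S \<omega> > x}"
definition S_large_Xmax_small :: "real \<Rightarrow> 'a set" where
  "S_large_Xmax_small x = {\<omega> \<in> space M. S \<omega> > x \<and> Xmax \<omega> \<le> x}"

definition tail_max :: "real \<Rightarrow> real" where "tail_max x = prob (exceeds_max x)"
definition tail_S :: "real \<Rightarrow> real" where "tail_S x = prob (exceeds_S x)"
definition tail_sum :: "real \<Rightarrow> real" where "tail_sum x = (\<Sum>i\<in>{1..n}. prob (exceeds i x))"

text \<open>The limits of \<open>share\<close> at infinity are \<open>u\<close> and \<open>U\<close>; the conclusion concerns
  \<open>cte_ratio (VaR\<^sub>q(S\<^sub>n))\<close> as \<open>q \<rightarrow> 1\<close>.\<close>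
definition share :: "real \<Rightarrow> real" where
  "share x = (\<Sum>i\<in>\<Omega>. prob (exceeds i x)) / tail_sum x"
definition cte_ratio :: "real \<Rightarrow> real" where
  "cte_ratio x = cond_exp_event M S\<Omega> (exceeds_S x) / x"

lemma measurable_Xmax[measurable]: "Xmax \<in> borel_measurable M"
  unfolding Xmax_def by (rule borel_measurable_Max) auto

lemma measurable_S[measurable]: "S \<in> borel_measurable M"
  unfolding S_def by measurable

lemma sets_exceeds[measurable]:
  "i \<in> {1..n} \<Longrightarrow> exceeds i x \<in> sets M" "exceeds_max x \<in> sets M" "exceeds_S x \<in> sets M"
  "S_large_Xmax_small x \<in> sets M"
  unfolding exceeds_def exceeds_max_def exceeds_S_def S_large_Xmax_small_def by measurable

lemma X_le_Xmax: "i \<in> {1..n} \<Longrightarrow> X i \<omega> \<le> Xmax \<omega>"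
  unfolding Xmax_def by (intro Max_ge) auto

lemma Xmax_attained: "\<exists>i\<in>{1..n}. Xmax \<omega> = X i \<omega>"
proof -
  have "Xmax \<omega> \<in> (\<lambda>i. X i \<omega>) ` {1..n}"
    unfolding Xmax_def using n2 by (intro Max_in) auto
  then show ?thesis by auto
qed

lemma Xmax_nonneg: "\<omega> \<in> space M \<Longrightarrow> 0 \<le> Xmax \<omega>"
  using X_le_Xmax[of 1 \<omega>] nonneg[of 1 \<omega>] n2 by auto

lemma X_le_S: "i \<in> {1..n} \<Longrightarrow> \<omega> \<in> space M \<Longrightarrow> X i \<omega> \<le> S \<omega>"
  unfolding S_def using nonneg by (intro member_le_sum) auto

lemma Xmax_le_S: "\<omega> \<in> space M \<Longrightarrow> Xmax \<omega> \<le> S \<omega>"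
  using Xmax_attained[of \<omega>] X_le_S by metis

lemma distfun_Xmax: "distfun M (\<lambda>\<omega>. Max ((\<lambda>i. X i \<omega>) ` {1..n})) = (\<lambda>x. 1 - tail_max x)"
  using distfun_eq_1_minus_prob_greater[OF measurable_Xmax]
  unfolding Xmax_def tail_max_def exceeds_max_def by auto

sublocale gmda_tail tail_max h
proof
  show antimono: "tail_max y \<le> tail_max x" if "x \<le> y" for x y
    unfolding tail_max_def exceeds_max_def using that by (intro finite_measure_mono) auto
  show "tail_max x > 0" for x
  proof -
    have "mono (\<lambda>x. 1 - tail_max x)" using antimono by (intro monoI) simp
    from upper_endpoint_infinite_less_1[OF this endpoint[unfolded distfun_Xmax]] show ?thesis
      by simp
  qed
  show "tail_max x = 1" if "x < 0" for x
  proof -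
    have "exceeds_max x = space M" using that Xmax_nonneg by (force simp: exceeds_max_def)
    then show ?thesis unfolding tail_max_def by (simp add: prob_space)
  qed
  show "(tail_max \<longlongrightarrow> 0) at_top"
    using prob_greater_tendsto_0[OF measurable_Xmax] unfolding tail_max_def exceeds_max_def .
  show "((\<lambda>x. tail_max (x + y * h x) / tail_max x) \<longlongrightarrow> exp (- y)) at_top" for y
    using gmda_max endpoint unfolding GMDA_def distfun_Xmax by simp
qed

lemma joint_exceedance_negligible:
  assumes "i \<in> {1..n}" "j \<in> {1..n}" "i \<noteq> j" "t > 0"
  shows "((\<lambda>x. prob {\<omega> \<in> space M. X i \<omega> > t * h x \<and> X j \<omega> > x} / tail_max x) \<longlongrightarrow> 0) at_top"
proof -
  have "{\<omega> \<in> space M. \<bar>X i \<omega>\<bar> > t * h x \<and> X j \<omega> > x}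
      = {\<omega> \<in> space M. X i \<omega> > t * h x \<and> X j \<omega> > x}" for x
    using nonneg[OF assms(1)] by auto
  then show ?thesis
    using cond1[OF assms] unfolding tail_max_def exceeds_max_def Xmax_def by simp
qed

lemma tail_max_dilation_decay:
  "eventually (\<lambda>z. prob {\<omega> \<in> space M. Xmax \<omega> > 2 * z} \<le> prob {\<omega> \<in> space M. Xmax \<omega> > z} / 4) at_top"
  using D_dilation_le[of 2 "1/4"] unfolding tail_max_def exceeds_max_def by simp

lemma integrable_Xmax: "integrable M Xmax"
  using integrable_of_doubling_decay[OF measurable_Xmax Xmax_nonneg tail_max_dilation_decay] .

lemma tail_integral_Xmax_le:
  "eventually (\<lambda>y. (\<integral>\<omega>. Xmax \<omega> * indicator (exceeds_max y) \<omega> \<partial>M) \<le> 4 * y * tail_max y) at_top"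
  using tail_integral_le_of_doubling_decay[OF measurable_Xmax Xmax_nonneg tail_max_dilation_decay]
  unfolding tail_max_def exceeds_max_def .

lemma tail_integral_Xmax_dilated_le:
  assumes "\<kappa> > 0"
  shows "eventually (\<lambda>x. (\<integral>\<omega>. Xmax \<omega> * indicator (exceeds_max (\<kappa> * x)) \<omega> \<partial>M)
    \<le> 4 * (\<kappa> * x) * tail_max (\<kappa> * x)) at_top"
proof -
  have "filterlim (\<lambda>x. \<kappa> * x) at_top at_top"
    by (rule filterlim_tendsto_pos_mult_at_top[OF tendsto_const assms filterlim_ident])
  from filterlim_iff[THEN iffD1, OF this, rule_format, OF tail_integral_Xmax_le] show ?thesis .
qed

lemma integrable_Xmax_indicator[simp]:
  "B \<in> sets M \<Longrightarrow> integrable M (\<lambda>\<omega>. Xmax \<omega> * indicator B \<omega>)"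
  using integrable_Xmax by (intro integrable_real_mult_indicator) auto

lemma integrable_indicator_X:
  assumes "i \<in> {1..n}" "B \<in> sets M"
  shows "integrable M (\<lambda>\<omega>. indicator B \<omega> * X i \<omega>)"
  using integrable_Xmax
proof (rule Bochner_Integration.integrable_bound)
  show "(\<lambda>\<omega>. indicator B \<omega> * X i \<omega>) \<in> borel_measurable M" using assms by measurable
  show "AE \<omega> in M. norm (indicator B \<omega> * X i \<omega>) \<le> norm (Xmax \<omega>)"
    using nonneg[OF assms(1)] X_le_Xmax[OF assms(1)] Xmax_nonneg by (auto simp: indicator_def)
qed

definition pairs :: "(nat \<times> nat) set" where "pairs = Sigma {1..n} (\<lambda>i. {1..n} - {i})"
definition ordered_pairs :: "(nat \<times> nat) set" where
  "ordered_pairs = {(i, j). i \<in> {1..n} \<and> j \<in> {1..n} \<and> i < j}"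

definition pair_tail :: "real \<Rightarrow> real" where
  "pair_tail x = (\<Sum>(i, j)\<in>pairs. prob {\<omega> \<in> space M. X i \<omega> > h x \<and> X j \<omega> > x})"

lemma finite_pairs[simp]: "finite pairs" "finite ordered_pairs"
  unfolding pairs_def ordered_pairs_def by (auto intro: finite_subset[of _ "{1..n} \<times> {1..n}"])

lemma pair_tail_negligible:
  assumes "e > 0"
  shows "eventually (\<lambda>x. pair_tail x \<le> e * tail_max x) at_top"
  unfolding pair_tail_def using assms
  by (intro sum_le_eventually)
    (auto simp: pairs_def intro!: joint_exceedance_negligible[where t = 1, simplified])

lemma tail_sum_le_tail_max_plus_pair_tail:
  assumes hx: "h x \<le> x"
  shows "tail_sum x \<le> tail_max x + pair_tail x"
proof -
  define B where "B i = {\<omega> \<in> space M. X i \<omega> > x \<and> (\<forall>j\<in>{1..n} - {i}. X j \<omega> \<le> x)}" for i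
  define C where "C i j = {\<omega> \<in> space M. X i \<omega> > h x \<and> X j \<omega> > x}" for i j
  have sets_B: "B i \<in> sets M" if "i \<in> {1..n}" for i
    unfolding B_def using that by measurable
  have sets_C: "C i j \<in> sets M" if "i \<in> {1..n}" "j \<in> {1..n}" for i j
    unfolding C_def using that by measurable
  have split: "prob (exceeds i x) \<le> prob (B i) + (\<Sum>j\<in>{1..n} - {i}. prob (C i j))"
    if i: "i \<in> {1..n}" for i
  proof -
    have "exceeds i x \<subseteq> B i \<union> (\<Union>j\<in>{1..n} - {i}. C i j)"
      using hx unfolding exceeds_def B_def C_def by (auto simp: not_le)
    then have "prob (exceeds i x) \<le> prob (B i \<union> (\<Union>j\<in>{1..n} - {i}. C i j))"
      using sets_B sets_C i by (intro finite_measure_mono) auto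
    also have "\<dots> \<le> prob (B i) + prob (\<Union>j\<in>{1..n} - {i}. C i j)"
      using sets_B sets_C i by (intro measure_Un_le) auto
    also have "prob (\<Union>j\<in>{1..n} - {i}. C i j) \<le> (\<Sum>j\<in>{1..n} - {i}. prob (C i j))"
      using sets_C i by (intro finite_measure_subadditive_finite) auto
    finally show ?thesis by simp
  qed
  have "tail_sum x \<le> (\<Sum>i\<in>{1..n}. prob (B i) + (\<Sum>j\<in>{1..n} - {i}. prob (C i j)))"
    unfolding tail_sum_def by (intro sum_mono split)
  also have "\<dots> = (\<Sum>i\<in>{1..n}. prob (B i)) + (\<Sum>i\<in>{1..n}. \<Sum>j\<in>{1..n} - {i}. prob (C i j))"
    by (rule sum.distrib)
  also have "(\<Sum>i\<in>{1..n}. prob (B i)) = prob (\<Union>i\<in>{1..n}. B i)"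
  proof (rule finite_measure_finite_Union[symmetric])
    show "disjoint_family_on B {1..n}" unfolding disjoint_family_on_def B_def by force
  qed (use sets_B in auto)
  also have "\<dots> \<le> tail_max x"
    unfolding tail_max_def exceeds_max_def B_def using X_le_Xmax
    by (intro finite_measure_mono) (auto intro: less_le_trans)
  also have "(\<Sum>i\<in>{1..n}. \<Sum>j\<in>{1..n} - {i}. prob (C i j)) = pair_tail x"
    unfolding pair_tail_def pairs_def C_def by (rule sum.Sigma) auto
  finally show ?thesis by simp
qed

lemma tail_sum_le:
  assumes "e > 0"
  shows "eventually (\<lambda>x. tail_sum x \<le> (1 + e) * tail_max x) at_top"
  using pair_tail_negligible[OF assms] h_le_linear[of 1, simplified]
  by eventually_elim (use tail_sum_le_tail_max_plus_pair_tail in \<open>force simp: algebra_simps\<close>)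

text \<open>If no two summands exceed \<open>L h x\<close>, one summand \<open>X\<^sub>j\<close> carries all but
  \<open>(n - 1) L h x\<close> of the sum; if moreover \<open>X\<^sub>j \<le> x - t h x\<close>, the others share at least
  \<open>t h x\<close>.\<close>
lemma sum_exceeds_cases:
  assumes \<omega>: "\<omega> \<in> space M" and Sx: "S \<omega> > x" and L: "L > 0" and t: "t > 0"
    and small: "real n * (L * hx) < x"
  shows "(\<exists>(i, j)\<in>ordered_pairs. X i \<omega> > L * hx \<and> X j \<omega> > L * hx)
       \<or> x - t * hx < Xmax \<omega>
       \<or> (\<exists>(i, j)\<in>pairs. X i \<omega> > t / (real n - 1) * hx \<and> X j \<omega> > x - (real n - 1) * L * hx)"
proof (cases "\<exists>(i, j)\<in>ordered_pairs. X i \<omega> > L * hx \<and> X j \<omega> > L * hx")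
  case False
  have "\<exists>j\<in>{1..n}. X j \<omega> > L * hx"
  proof (rule ccontr)
    assume "\<not> ?thesis"
    then have "S \<omega> \<le> (\<Sum>i\<in>{1..n}. L * hx)" unfolding S_def by (intro sum_mono) (simp add: not_less)
    then show False using Sx small by simp
  qed
  then obtain j where j: "j \<in> {1..n}" "X j \<omega> > L * hx" by blast
  have others: "X i \<omega> \<le> L * hx" if i: "i \<in> {1..n} - {j}" for i
  proof (rule ccontr)
    assume "\<not> X i \<omega> \<le> L * hx"
    then have "(min i j, max i j) \<in> ordered_pairs"
      "X (min i j) \<omega> > L * hx" "X (max i j) \<omega> > L * hx"
      using i j unfolding ordered_pairs_def by (auto simp: min_def max_def)
    then show False using False by fastforce
  qed
  have S_split: "S \<omega> = X j \<omega> + (\<Sum>i\<in>{1..n} - {j}. X i \<omega>)"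
    unfolding S_def using j by (subst sum.remove[of _ j]) auto
  have card: "real (card ({1..n} - {j})) = real n - 1" using j n2 by simp
  have "(\<Sum>i\<in>{1..n} - {j}. X i \<omega>) \<le> (\<Sum>i\<in>{1..n} - {j}. L * hx)" by (intro sum_mono others)
  then have Xj: "X j \<omega> > x - (real n - 1) * L * hx" using S_split Sx card by simp
  show ?thesis
  proof (cases "x - t * hx < Xmax \<omega>")
    case False
    then have "(\<Sum>i\<in>{1..n} - {j}. X i \<omega>) > t * hx"
      using S_split Sx X_le_Xmax[OF j(1), of \<omega>] by linarith
    moreover have "(\<Sum>i\<in>{1..n} - {j}. t / (real n - 1) * hx) = t * hx" using card n2 by simp
    ultimately have "\<not> (\<forall>i\<in>{1..n} - {j}. X i \<omega> \<le> t / (real n - 1) * hx)"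
      using sum_mono[of "{1..n} - {j}" "\<lambda>i. X i \<omega>" "\<lambda>_. t / (real n - 1) * hx"] by force
    then obtain i where "i \<in> {1..n} - {j}" "X i \<omega> > t / (real n - 1) * hx"
      by (meson not_le)
    then show ?thesis using j Xj unfolding pairs_def by blast
  qed simp
qed simp

lemma prob_S_large_Xmax_small_le:
  assumes L: "L > 0" and t: "t > 0" and small: "real n * (L * h x) < x"
  shows "prob (S_large_Xmax_small x)
    \<le> (\<Sum>(i, j)\<in>ordered_pairs. prob {\<omega> \<in> space M. X i \<omega> > L * h x \<and> X j \<omega> > L * h x})
      + (tail_max (x - t * h x) - tail_max x)
      + (\<Sum>(i, j)\<in>pairs. prob {\<omega> \<in> space M. X i \<omega> > t / (real n - 1) * h x
                                     \<and> X j \<omega> > x - (real n - 1) * L * h x})"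
proof -
  define V where "V = (\<lambda>(i, j). {\<omega> \<in> space M. X i \<omega> > L * h x \<and> X j \<omega> > L * h x})"
  define W where "W = (\<lambda>(i, j). {\<omega> \<in> space M. X i \<omega> > t / (real n - 1) * h x
                                     \<and> X j \<omega> > x - (real n - 1) * L * h x})"
  define U where "U = exceeds_max (x - t * h x) - exceeds_max x"
  have sets_V: "V p \<in> sets M" if "p \<in> ordered_pairs" for p
    using that unfolding V_def ordered_pairs_def by auto
  have sets_W: "W p \<in> sets M" if "p \<in> pairs" for p
    using that unfolding W_def pairs_def by auto
  have "S_large_Xmax_small x \<subseteq> (\<Union>p\<in>ordered_pairs. V p) \<union> U \<union> (\<Union>p\<in>pairs. W p)"
  proof
    fix \<omega> assume "\<omega> \<in> S_large_Xmax_small x"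
    then have \<omega>: "\<omega> \<in> space M" "S \<omega> > x" "Xmax \<omega> \<le> x"
      unfolding S_large_Xmax_small_def by auto
    from sum_exceeds_cases[OF \<omega>(1,2) L t small] \<omega>
    show "\<omega> \<in> (\<Union>p\<in>ordered_pairs. V p) \<union> U \<union> (\<Union>p\<in>pairs. W p)"
      unfolding U_def exceeds_max_def V_def W_def by auto
  qed
  then have "prob (S_large_Xmax_small x) \<le> prob ((\<Union>p\<in>ordered_pairs. V p) \<union> U \<union> (\<Union>p\<in>pairs. W p))"
    using sets_V sets_W by (intro finite_measure_mono) (auto simp: U_def)
  also have "\<dots> \<le> prob ((\<Union>p\<in>ordered_pairs. V p) \<union> U) + prob (\<Union>p\<in>pairs. W p)"
    using sets_V sets_W by (intro measure_Un_le) (auto simp: U_def)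
  also have "prob ((\<Union>p\<in>ordered_pairs. V p) \<union> U) \<le> prob (\<Union>p\<in>ordered_pairs. V p) + prob U"
    using sets_V by (intro measure_Un_le) (auto simp: U_def)
  also have "prob (\<Union>p\<in>ordered_pairs. V p) \<le> (\<Sum>p\<in>ordered_pairs. prob (V p))"
    using sets_V by (intro finite_measure_subadditive_finite) auto
  also have "prob (\<Union>p\<in>pairs. W p) \<le> (\<Sum>p\<in>pairs. prob (W p))"
    using sets_W by (intro finite_measure_subadditive_finite) auto
  also have "prob U = tail_max (x - t * h x) - tail_max x"
  proof -
    have "t * h x > 0" using t hpos[of x] by simp
    then have "exceeds_max x \<subseteq> exceeds_max (x - t * h x)"
      unfolding exceeds_max_def by auto
    then show ?thesis unfolding U_def tail_max_def by (intro finite_measure_Diff) auto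
  qed
  finally show ?thesis unfolding V_def W_def by (simp add: case_prod_beta)
qed

lemma pairs_shifted_negligible:
  assumes a: "a > 0" and c: "c \<ge> 0" and e: "e > 0"
  shows "eventually (\<lambda>x. (\<Sum>(i, j)\<in>pairs.
    prob {\<omega> \<in> space M. X i \<omega> > a * h x \<and> X j \<omega> > x - c * h x}) \<le> e * tail_max x) at_top"
proof -
  have "eventually (\<lambda>x. (\<Sum>(i, j)\<in>pairs. prob {\<omega> \<in> space M. X i \<omega> > (a / 2) * h x \<and> X j \<omega> > x})
      \<le> e / (2 * exp c) * tail_max x) at_top"
  proof (rule sum_le_eventually[OF finite_pairs(1)])
    fix p assume "p \<in> pairs"
    then obtain i j where "p = (i, j)" "i \<in> {1..n}" "j \<in> {1..n}" "i \<noteq> j"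
      unfolding pairs_def by blast
    then show "((\<lambda>x. (case p of (i, j) \<Rightarrow> prob {\<omega> \<in> space M. X i \<omega> > (a / 2) * h x \<and> X j \<omega> > x})
        / tail_max x) \<longlongrightarrow> 0) at_top"
      using a joint_exceedance_negligible[of i j "a / 2"] by simp
  qed (use e in simp)
  then have shifted: "eventually (\<lambda>x. (\<Sum>(i, j)\<in>pairs. prob {\<omega> \<in> space M.
      X i \<omega> > (a / 2) * h (x - c * h x) \<and> X j \<omega> > x - c * h x})
      \<le> e / (2 * exp c) * tail_max (x - c * h x)) at_top"
    by (rule eventually_filterlim_minus_h[OF c])
  have shift_back: "eventually (\<lambda>x. tail_max (x + (- c) * h x) < (2 * exp c) * tail_max x) at_top"
    by (rule gmda_upper) simp
  from shifted shift_back h_shift_le[OF c] show ?thesis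
  proof eventually_elim
    case (elim x)
    have "(a / 2) * h (x - c * h x) \<le> (a / 2) * (2 * h x)"
      using elim(3) a by (intro mult_left_mono) auto
    then have threshold: "(a / 2) * h (x - c * h x) \<le> a * h x" by simp
    have "(\<Sum>(i, j)\<in>pairs. prob {\<omega> \<in> space M. X i \<omega> > a * h x \<and> X j \<omega> > x - c * h x})
        \<le> (\<Sum>(i, j)\<in>pairs. prob {\<omega> \<in> space M. X i \<omega> > (a / 2) * h (x - c * h x)
                                     \<and> X j \<omega> > x - c * h x})"
    proof (rule sum_mono, clarify)
      fix i j assume "(i, j) \<in> pairs"
      then show "prob {\<omega> \<in> space M. X i \<omega> > a * h x \<and> X j \<omega> > x - c * h x}
          \<le> prob {\<omega> \<in> space M. X i \<omega> > (a / 2) * h (x - c * h x) \<and> X j \<omega> > x - c * h x}"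
        using le_less_trans[OF threshold] unfolding pairs_def
        by (intro finite_measure_mono) (blast, auto)
    qed
    also have "\<dots> \<le> e / (2 * exp c) * tail_max (x - c * h x)" by (rule elim(1))
    also have "\<dots> \<le> e / (2 * exp c) * ((2 * exp c) * tail_max x)"
      using elim(2) e by (intro mult_left_mono) auto
    also have "\<dots> = e * tail_max x" by simp
    finally show ?case .
  qed
qed

lemma S_large_Xmax_small_negligible:
  assumes e: "e > 0"
  shows "eventually (\<lambda>x. prob (S_large_Xmax_small x) \<le> e * tail_max x) at_top"
proof -
  obtain L where L: "L > 0" and joint_large: "\<And>i j. i \<in> {1..n} \<Longrightarrow> j \<in> {1..n} \<Longrightarrow> i < j \<Longrightarrow>
      ((\<lambda>x. prob {\<omega> \<in> space M. X i \<omega> > L * h x \<and> X j \<omega> > L * h x} / tail_max x) \<longlongrightarrow> 0) at_top"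
    using cond2 unfolding tail_max_def exceeds_max_def Xmax_def by blast
  \<comment> \<open>With this \<open>t\<close>, the band \<open>x - t h x < X\<^sub>n\<^sub>:\<^sub>n \<le> x\<close> has probability \<open>\<sim> (e / 4) P(X\<^sub>n\<^sub>:\<^sub>n > x)\<close>.\<close>
  define t where "t = ln (1 + e / 4)"
  have t: "t > 0" "exp t = 1 + e / 4" unfolding t_def using e by auto
  have ordered: "eventually (\<lambda>x. (\<Sum>(i, j)\<in>ordered_pairs.
      prob {\<omega> \<in> space M. X i \<omega> > L * h x \<and> X j \<omega> > L * h x}) \<le> e / 3 * tail_max x) at_top"
    using e by (intro sum_le_eventually finite_pairs)
      (auto simp: ordered_pairs_def intro!: joint_large)
  have band: "eventually (\<lambda>x. tail_max (x - t * h x) < (1 + e / 3) * tail_max x) at_top"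
    using gmda_upper[where b = "1 + e / 3" and y = "- t"] t e by simp
  have shifted: "eventually (\<lambda>x. (\<Sum>(i, j)\<in>pairs. prob {\<omega> \<in> space M.
      X i \<omega> > t / (real n - 1) * h x \<and> X j \<omega> > x - (real n - 1) * L * h x})
      \<le> e / 3 * tail_max x) at_top"
    using n2 t L e by (intro pairs_shifted_negligible) auto
  have h_linear: "eventually (\<lambda>x. h x \<le> (1 / (2 * real n * L)) * x) at_top"
    by (rule h_le_linear) (use L n2 in simp)
  from ordered band shifted h_linear eventually_gt_at_top[of 0] show ?thesis
  proof eventually_elim
    case (elim x)
    have "real n * (L * h x) \<le> real n * (L * ((1 / (2 * real n * L)) * x))"
      using elim(4) L by (intro mult_left_mono) auto
    also have "\<dots> < x" using L n2 elim(5) by (simp add: field_simps)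
    finally have small: "real n * (L * h x) < x" .
    have "(1 + e / 3) * tail_max x = tail_max x + e / 3 * tail_max x"
      by (simp add: algebra_simps)
    then show ?case
      using prob_S_large_Xmax_small_le[OF L t(1) small] elim(1-3) by linarith
  qed
qed

lemma tail_max_le_tail_S: "tail_max x \<le> tail_S x"
  unfolding tail_max_def tail_S_def exceeds_max_def exceeds_S_def using Xmax_le_S
  by (intro finite_measure_mono) (auto intro: less_le_trans)

lemma tail_S_le: "tail_S x \<le> tail_max x + prob (S_large_Xmax_small x)"
proof -
  have "exceeds_S x \<subseteq> exceeds_max x \<union> S_large_Xmax_small x"
    unfolding exceeds_S_def exceeds_max_def S_large_Xmax_small_def by auto
  then have "tail_S x \<le> prob (exceeds_max x \<union> S_large_Xmax_small x)"
    unfolding tail_S_def by (intro finite_measure_mono) auto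
  also have "\<dots> \<le> tail_max x + prob (S_large_Xmax_small x)"
    unfolding tail_max_def by (intro measure_Un_le) auto
  finally show ?thesis .
qed

lemma tail_max_le_tail_sum: "tail_max x \<le> tail_sum x"
proof -
  have "exceeds_max x \<subseteq> (\<Union>i\<in>{1..n}. exceeds i x)"
  proof
    fix \<omega> assume "\<omega> \<in> exceeds_max x"
    moreover obtain i where "i \<in> {1..n}" "Xmax \<omega> = X i \<omega>" using Xmax_attained by blast
    ultimately show "\<omega> \<in> (\<Union>i\<in>{1..n}. exceeds i x)" unfolding exceeds_max_def exceeds_def by auto
  qed
  then have "tail_max x \<le> prob (\<Union>i\<in>{1..n}. exceeds i x)"
    unfolding tail_max_def by (intro finite_measure_mono) auto
  also have "\<dots> \<le> tail_sum x"
    unfolding tail_sum_def by (intro finite_measure_subadditive_finite) auto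
  finally show ?thesis .
qed

lemma tail_S_pos: "tail_S x > 0" and tail_sum_pos: "tail_sum x > 0"
  using D_pos[of x] tail_max_le_tail_S[of x] tail_max_le_tail_sum[of x] by auto

lemma share_nonneg: "0 \<le> share x" and share_le_1: "share x \<le> 1"
proof -
  have "(\<Sum>i\<in>\<Omega>. prob (exceeds i x)) \<le> tail_sum x"
    unfolding tail_sum_def using \<Omega> by (intro sum_mono2) auto
  moreover have "0 \<le> (\<Sum>i\<in>\<Omega>. prob (exceeds i x))" by (intro sum_nonneg) simp
  ultimately show "0 \<le> share x" "share x \<le> 1"
    unfolding share_def using tail_sum_pos[of x] by simp_all
qed

definition moderate :: "nat \<Rightarrow> real \<Rightarrow> real \<Rightarrow> 'a set" where
  "moderate k d x = {\<omega> \<in> space M. d * x < X k \<omega> \<and> X k \<omega> \<le> x \<and> S \<omega> > x}"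

definition cte_part :: "nat \<Rightarrow> real \<Rightarrow> real" where
  "cte_part k x = (\<integral>\<omega>. indicator (exceeds_S x) \<omega> * X k \<omega> \<partial>M)"

lemma sets_moderate[measurable]: "k \<in> {1..n} \<Longrightarrow> moderate k d x \<in> sets M"
  unfolding moderate_def by measurable

lemma cte_ratio_eq: "cte_ratio x = (\<Sum>k\<in>\<Omega>. cte_part k x) / tail_S x / x"
proof -
  have "(\<integral>\<omega>. indicator (exceeds_S x) \<omega> * S\<Omega> \<omega> \<partial>M) = (\<Sum>k\<in>\<Omega>. cte_part k x)"
    unfolding S\<Omega>_def cte_part_def sum_distrib_left using \<Omega>
    by (intro Bochner_Integration.integral_sum) (auto intro!: integrable_indicator_X)
  then show ?thesis unfolding cte_ratio_def cond_exp_event_def tail_S_def by simp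
qed

lemma cte_part_ge:
  assumes k: "k \<in> {1..n}" and x: "x > 0"
  shows "x * prob (exceeds k x) \<le> cte_part k x"
proof -
  have "x * prob (exceeds k x) = (\<integral>\<omega>. x * indicator (exceeds k x) \<omega> \<partial>M)"
    using k by (simp add: integral_const_mult_indicator)
  also have "\<dots> \<le> cte_part k x" unfolding cte_part_def
  proof (rule integral_mono)
    show "integrable M (\<lambda>\<omega>. x * indicator (exceeds k x) \<omega>)"
      using k by simp
    show "integrable M (\<lambda>\<omega>. indicator (exceeds_S x) \<omega> * X k \<omega>)"
      using k by (intro integrable_indicator_X) auto
    fix \<omega> assume \<omega>: "\<omega> \<in> space M"
    show "x * indicator (exceeds k x) \<omega> \<le> indicator (exceeds_S x) \<omega> * X k \<omega>"
      using X_le_S[OF k \<omega>] nonneg[OF k \<omega>] \<omega>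
      unfolding exceeds_def exceeds_S_def by (auto simp: indicator_def)
  qed
  finally show ?thesis .
qed

lemma indicator_exceeds_S_X_le:
  assumes \<omega>: "\<omega> \<in> space M" and x: "x \<ge> 0" and d: "d > 0" and k: "k \<in> {1..n}"
  shows "indicator (exceeds_S x) \<omega> * X k \<omega>
     \<le> x * indicator (exceeds k x) \<omega> + d * x * indicator (exceeds_max x) \<omega>
       + Xmax \<omega> * indicator (exceeds_max ((1 + d) * x)) \<omega> + d * x * indicator (exceeds_S x) \<omega>
       + x * indicator (moderate k d x) \<omega>"
  using large_sum_summand_le[OF nonneg[OF k \<omega>] X_le_Xmax[OF k] x d, of "S \<omega>"] \<omega>
  unfolding indicator_def exceeds_def exceeds_max_def exceeds_S_def moderate_def by simp

lemma cte_part_le: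
  assumes x: "x \<ge> 0" and d: "d > 0" and k: "k \<in> {1..n}"
  shows "cte_part k x \<le> x * prob (exceeds k x) + d * x * tail_max x
     + (\<integral>\<omega>. Xmax \<omega> * indicator (exceeds_max ((1 + d) * x)) \<omega> \<partial>M) + d * x * tail_S x
     + x * prob (moderate k d x)"
proof -
  have "cte_part k x \<le> (\<integral>\<omega>. x * indicator (exceeds k x) \<omega> + d * x * indicator (exceeds_max x) \<omega>
       + Xmax \<omega> * indicator (exceeds_max ((1 + d) * x)) \<omega> + d * x * indicator (exceeds_S x) \<omega>
       + x * indicator (moderate k d x) \<omega> \<partial>M)"
    unfolding cte_part_def using k
    by (intro integral_mono indicator_exceeds_S_X_le[OF _ x d k] Bochner_Integration.integrable_add
        integrable_mult_right integrable_indicator_real integrable_indicator_X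
        integrable_Xmax_indicator) auto
  also have "\<dots> = x * prob (exceeds k x) + d * x * tail_max x
     + (\<integral>\<omega>. Xmax \<omega> * indicator (exceeds_max ((1 + d) * x)) \<omega> \<partial>M) + d * x * tail_S x
     + x * prob (moderate k d x)"
    by (simp add: integral_const_mult_indicator tail_max_def tail_S_def
        Bochner_Integration.integrable_add
        sets_exceeds(1)[OF k] sets_moderate[OF k])
  finally show ?thesis .
qed

lemma prob_moderate_le:
  assumes k: "k \<in> {1..n}" and hd: "h x \<le> d * x"
  shows "prob (moderate k d x) \<le> prob (S_large_Xmax_small x) + pair_tail x"
proof -
  define C where "C i = {\<omega> \<in> space M. X k \<omega> > h x \<and> X i \<omega> > x}" for i
  have sets_C: "C i \<in> sets M" if "i \<in> {1..n}" for i using that k unfolding C_def by measurable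
  have "moderate k d x \<subseteq> S_large_Xmax_small x \<union> (\<Union>i\<in>{1..n} - {k}. C i)"
  proof
    fix \<omega> assume \<omega>: "\<omega> \<in> moderate k d x"
    obtain i where i: "i \<in> {1..n}" "Xmax \<omega> = X i \<omega>" using Xmax_attained by blast
    show "\<omega> \<in> S_large_Xmax_small x \<union> (\<Union>i\<in>{1..n} - {k}. C i)"
    proof (cases "Xmax \<omega> \<le> x")
      case False
      then have "\<omega> \<in> C i" "i \<noteq> k" using \<omega> i hd unfolding moderate_def C_def by auto
      then show ?thesis using i by blast
    qed (use \<omega> in \<open>auto simp: moderate_def S_large_Xmax_small_def\<close>)
  qed
  then have "prob (moderate k d x) \<le> prob (S_large_Xmax_small x \<union> (\<Union>i\<in>{1..n} - {k}. C i))"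
    using sets_C by (intro finite_measure_mono) auto
  also have "\<dots> \<le> prob (S_large_Xmax_small x) + prob (\<Union>i\<in>{1..n} - {k}. C i)"
    using sets_C by (intro measure_Un_le) auto
  also have "prob (\<Union>i\<in>{1..n} - {k}. C i) \<le> (\<Sum>i\<in>{1..n} - {k}. prob (C i))"
    using sets_C by (intro finite_measure_subadditive_finite) auto
  also have "\<dots> = (\<Sum>(i, j)\<in>{k} \<times> ({1..n} - {k}).
      prob {\<omega> \<in> space M. X i \<omega> > h x \<and> X j \<omega> > x})"
    unfolding C_def by (simp add: sum.cartesian_product[symmetric])
  also have "\<dots> \<le> pair_tail x"
    unfolding pair_tail_def using k by (intro sum_mono2) (auto simp: pairs_def)
  finally show ?thesis by simp
qed

lemma share_le_cte_ratio:
  assumes e: "e > 0"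
  shows "eventually (\<lambda>x. share x - e \<le> cte_ratio x) at_top"
  using S_large_Xmax_small_negligible[OF e] eventually_gt_at_top[of 0]
proof eventually_elim
  case (elim x)
  define \<Sigma> where "\<Sigma> = (\<Sum>i\<in>\<Omega>. prob (exceeds i x))"
  have \<Sigma>: "\<Sigma> \<ge> 0" unfolding \<Sigma>_def by (intro sum_nonneg) auto
  have "x * \<Sigma> \<le> (\<Sum>k\<in>\<Omega>. cte_part k x)"
    unfolding \<Sigma>_def sum_distrib_left using \<Omega> elim(2) by (intro sum_mono cte_part_ge) auto
  then have "x * \<Sigma> / tail_S x / x \<le> cte_ratio x"
    unfolding cte_ratio_eq using tail_S_pos[of x] elim(2) by (intro divide_right_mono) auto
  then have lower: "\<Sigma> / tail_S x \<le> cte_ratio x" using elim(2) by simp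
  have "tail_S x \<le> (1 + e) * tail_max x" using tail_S_le[of x] elim(1) by (simp add: algebra_simps)
  also have "\<dots> \<le> (1 + e) * tail_sum x" using tail_max_le_tail_sum[of x] e by simp
  finally have "\<Sigma> / ((1 + e) * tail_sum x) \<le> \<Sigma> / tail_S x"
    using \<Sigma> tail_S_pos[of x] by (intro divide_left_mono) auto
  moreover have "\<Sigma> / ((1 + e) * tail_sum x) = share x / (1 + e)" unfolding share_def \<Sigma>_def by simp
  ultimately have "share x / (1 + e) \<le> cte_ratio x" using lower by linarith
  moreover have "share x - e \<le> share x / (1 + e)"
  proof -
    have "share x * e \<le> e" using mult_right_mono[OF share_le_1[of x], of e] e by simp
    moreover have "(share x - e) * (1 + e) = share x + share x * e - e - e * e"
      by (simp add: algebra_simps)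
    ultimately have "(share x - e) * (1 + e) \<le> share x" using zero_le_square[of e] by linarith
    then show ?thesis using e by (simp add: le_divide_eq)
  qed
  ultimately show ?case by simp
qed

lemma cte_part_le_of_bounds:
  assumes k: "k \<in> {1..n}" and x: "x > 0" and d: "d > 0" "d \<le> 1" and \<eta>: "\<eta> \<ge> 0"
    and S_large: "prob (S_large_Xmax_small x) \<le> d * tail_max x"
    and pairs: "pair_tail x \<le> d * tail_max x" and h: "h x \<le> d * x"
    and tail_integral: "(\<integral>\<omega>. Xmax \<omega> * indicator (exceeds_max ((1 + d) * x)) \<omega> \<partial>M)
      \<le> 4 * ((1 + d) * x) * tail_max ((1 + d) * x)"
    and dilation: "tail_max ((1 + d) * x) \<le> \<eta> * tail_max x"
  shows "cte_part k x \<le> x * prob (exceeds k x) + x * tail_S x * (4 * d + 8 * \<eta>)"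
proof -
  have max_S: "tail_max x \<le> tail_S x" by (rule tail_max_le_tail_S)
  have "4 * ((1 + d) * x) * tail_max ((1 + d) * x) \<le> 4 * ((1 + d) * x) * (\<eta> * tail_max x)"
    using dilation x d by (intro mult_left_mono) auto
  also have "\<dots> \<le> 4 * (2 * x) * (\<eta> * tail_S x)"
    using d x \<eta> max_S D_pos[of x] by (intro mult_mono mult_left_mono) auto
  also have "\<dots> = x * tail_S x * (8 * \<eta>)" by simp
  finally have "(\<integral>\<omega>. Xmax \<omega> * indicator (exceeds_max ((1 + d) * x)) \<omega> \<partial>M) \<le> x * tail_S x * (8 * \<eta>)"
    by (rule order_trans[OF tail_integral])
  moreover have "x * prob (moderate k d x) \<le> x * tail_S x * (2 * d)"
  proof -
    have "prob (moderate k d x) \<le> 2 * d * tail_max x"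
      using prob_moderate_le[OF k h] S_large pairs by linarith
    also have "\<dots> \<le> 2 * d * tail_S x" using max_S d by (intro mult_left_mono) auto
    finally show ?thesis using x by (simp add: mult.commute mult.left_commute)
  qed
  moreover have "d * x * tail_max x \<le> d * x * tail_S x"
    using max_S d x by (intro mult_left_mono) auto
  ultimately show ?thesis
    using cte_part_le[OF less_imp_le[OF x] d(1) k] by (simp add: algebra_simps)
qed

lemma cte_ratio_le_of_bounds:
  assumes x: "x > 0" and d: "d > 0" "d \<le> 1" and \<eta>: "\<eta> \<ge> 0"
    and S_large: "prob (S_large_Xmax_small x) \<le> d * tail_max x"
    and pairs: "pair_tail x \<le> d * tail_max x" and h: "h x \<le> d * x"
    and tail_integral: "(\<integral>\<omega>. Xmax \<omega> * indicator (exceeds_max ((1 + d) * x)) \<omega> \<partial>M)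
      \<le> 4 * ((1 + d) * x) * tail_max ((1 + d) * x)"
    and dilation: "tail_max ((1 + d) * x) \<le> \<eta> * tail_max x"
    and tail_sum: "tail_sum x \<le> (1 + d) * tail_max x"
  shows "cte_ratio x \<le> share x + d + real n * (4 * d + 8 * \<eta>)"
proof -
  define \<Sigma> where "\<Sigma> = (\<Sum>i\<in>\<Omega>. prob (exceeds i x))"
  define \<epsilon> where "\<epsilon> = 4 * d + 8 * \<eta>"
  have \<Sigma>: "\<Sigma> \<ge> 0" unfolding \<Sigma>_def by (intro sum_nonneg) auto
  have "real (card \<Omega>) \<le> real n" using card_mono[OF _ \<Omega>] by simp
  then have "real (card \<Omega>) * (x * tail_S x * \<epsilon>) \<le> real n * (x * tail_S x * \<epsilon>)"
    using x tail_S_pos[of x] d \<eta> unfolding \<epsilon>_def by (intro mult_right_mono) auto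
  moreover have "(\<Sum>k\<in>\<Omega>. cte_part k x) \<le> (\<Sum>k\<in>\<Omega>. x * prob (exceeds k x) + x * tail_S x * \<epsilon>)"
    unfolding \<epsilon>_def using \<Omega> assms by (intro sum_mono cte_part_le_of_bounds) auto
  ultimately have "(\<Sum>k\<in>\<Omega>. cte_part k x) \<le> x * \<Sigma> + real n * (x * tail_S x * \<epsilon>)"
    unfolding \<Sigma>_def by (simp add: sum.distrib sum_distrib_left)
  then have "cte_ratio x \<le> (x * \<Sigma> + real n * (x * tail_S x * \<epsilon>)) / tail_S x / x"
    unfolding cte_ratio_eq using tail_S_pos[of x] x by (intro divide_right_mono) auto
  also have "\<dots> = \<Sigma> / tail_S x + real n * \<epsilon>"
    using tail_S_pos[of x] x by (simp add: field_simps)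
  also have "\<Sigma> / tail_S x \<le> \<Sigma> / tail_max x"
    using \<Sigma> D_pos[of x] tail_max_le_tail_S[of x] by (intro divide_left_mono) auto
  also have "\<Sigma> / tail_max x = share x * (tail_sum x / tail_max x)"
    unfolding share_def \<Sigma>_def using tail_sum_pos[of x] by simp
  also have "\<dots> \<le> share x * (1 + d)"
    using tail_sum D_pos[of x] share_nonneg[of x]
    by (intro mult_left_mono) (auto simp: divide_le_eq)
  also have "\<dots> \<le> share x + d" using share_le_1[of x] d by (simp add: algebra_simps)
  finally show ?thesis unfolding \<epsilon>_def by simp
qed

lemma cte_ratio_le_share:
  assumes e: "e > 0"
  shows "eventually (\<lambda>x. cte_ratio x \<le> share x + e) at_top"
proof -
  define d where "d = min e 1 / (16 * real n)"
  define \<eta> where "\<eta> = min e 1 / (32 * real n)"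
  have n: "real n \<ge> 2" using n2 by simp
  have "d \<le> e / 32" "d \<le> 1 / 32"
    unfolding d_def
    using e n frac_le[of e "min e 1" 32 "16 * real n"] frac_le[of 1 "min e 1" 32 "16 * real n"]
    by auto
  then have d: "d > 0" "d \<le> 1" "d \<le> e / 2" unfolding d_def using e n by auto
  have \<eta>: "\<eta> > 0" unfolding \<eta>_def using e n by simp
  have dilation: "1 + d > 1" "1 + d > 0" using d by simp_all
  have "real n * (4 * d + 8 * \<eta>) = min e 1 / 2"
    unfolding d_def \<eta>_def using n by (simp add: field_simps)
  then have error: "real n * (4 * d + 8 * \<eta>) \<le> e / 2" by simp
  from S_large_Xmax_small_negligible[OF d(1)] pair_tail_negligible[OF d(1)] h_le_linear[OF d(1)]
    tail_integral_Xmax_dilated_le[OF dilation(2)] D_dilation_le[OF dilation(1) \<eta>]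
    tail_sum_le[OF d(1)] eventually_gt_at_top[of 0]
  show ?thesis
  proof eventually_elim
    case (elim x)
    then have "cte_ratio x \<le> share x + d + real n * (4 * d + 8 * \<eta>)"
      using d \<eta> by (intro cte_ratio_le_of_bounds) auto
    then show ?case using d(3) error by simp
  qed
qed

end

theorem theorem4p1:
  fixes M :: "'a measure" and X :: "nat \<Rightarrow> 'a \<Rightarrow> real" and n :: nat
    and h :: "real \<Rightarrow> real" and \<Omega> :: "nat set"
  assumes "prob_space M"
    and n2: "n \<ge> 2"
    and meas: "\<And>i. i \<in> {1..n} \<Longrightarrow> X i \<in> borel_measurable M"
    and nonneg: "\<And>i \<omega>. i \<in> {1..n} \<Longrightarrow> \<omega> \<in> space M \<Longrightarrow> X i \<omega> \<ge> 0"
    and nondeg: "\<And>i. i \<in> {1..n} \<Longrightarrow> measure M {\<omega> \<in> space M. X i \<omega> = 0} \<noteq> 1"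
    and endpoint: "upper_endpoint (distfun M (\<lambda>\<omega>. Max ((\<lambda>i. X i \<omega>) ` {1..n}))) = \<infinity>"
    and hpos: "\<And>x. h x > 0"
    and gmda: "GMDA (distfun M (\<lambda>\<omega>. Max ((\<lambda>i. X i \<omega>) ` {1..n}))) h"
    and cond1: "\<And>i j t. i \<in> {1..n} \<Longrightarrow> j \<in> {1..n} \<Longrightarrow> i \<noteq> j \<Longrightarrow> t > 0 \<Longrightarrow>
       ((\<lambda>x. measure M {\<omega> \<in> space M. \<bar>X i \<omega>\<bar> > t * h x \<and> X j \<omega> > x}
           / measure M {\<omega> \<in> space M. Max ((\<lambda>k. X k \<omega>) ` {1..n}) > x}) \<longlongrightarrow> 0) at_top"
    and cond2: "\<exists>L>0. \<forall>i\<in>{1..n}. \<forall>j\<in>{1..n}. i < j \<longrightarrow>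
       ((\<lambda>x. measure M {\<omega> \<in> space M. X i \<omega> > L * h x \<and> X j \<omega> > L * h x}
           / measure M {\<omega> \<in> space M. Max ((\<lambda>k. X k \<omega>) ` {1..n}) > x}) \<longlongrightarrow> 0) at_top"
    and \<Omega>: "\<Omega> \<subseteq> {1..n}" "\<Omega> \<noteq> {}"
  shows
   "let S = (\<lambda>\<omega>. \<Sum>i\<in>{1..n}. X i \<omega>);
        ratio = (\<lambda>x. (\<Sum>i\<in>\<Omega>. measure M {\<omega> \<in> space M. X i \<omega> > x})
                     / (\<Sum>i\<in>{1..n}. measure M {\<omega> \<in> space M. X i \<omega> > x}));
        cte = (\<lambda>q. cond_exp_event M (\<lambda>\<omega>. \<Sum>i\<in>\<Omega>. X i \<omega>)
                       {\<omega> \<in> space M. S \<omega> > VaR M S q} / VaR M S q)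
    in Liminf at_top (\<lambda>x. ereal (ratio x)) \<le> Liminf (at_left 1) (\<lambda>q. ereal (cte q))
     \<and> Liminf (at_left 1) (\<lambda>q. ereal (cte q)) \<le> Limsup (at_left 1) (\<lambda>q. ereal (cte q))
     \<and> Limsup (at_left 1) (\<lambda>q. ereal (cte q)) \<le> Limsup at_top (\<lambda>x. ereal (ratio x))"
proof -
  interpret cte_asymptotics M X n h \<Omega>
    by (rule cte_asymptotics.intro[OF assms(1)], rule cte_asymptotics_axioms.intro)
      (use assms in auto)
  have S_eq: "(\<lambda>\<omega>. \<Sum>i\<in>{1..n}. X i \<omega>) = S" unfolding S_def ..
  have "filterlim (VaR M S) at_top (at_left 1)"
    using VaR_tendsto_at_top[OF measurable_S] tail_S_pos unfolding tail_S_def exceeds_S_def by blast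
  from Liminf_Limsup_comp_squeeze[OF share_le_cte_ratio cte_ratio_le_share this] show ?thesis
    unfolding Let_def S_eq share_def tail_sum_def exceeds_def cte_ratio_def exceeds_S_def S\<Omega>_def .
qed

end
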